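(* Let $X\colon[0,T]\to\mathbb{R}^d$ be a c\`adl\`ag path which has finite $p$-variation for every $p>2$, and let $q\in(2,3)$. Then there is a constant $C>0$ (not depending on $n$, $s$, $t$ or $c$) such that for every super-additive function $c\colon \Delta_T\to [0,\infty)$ with $|X_t-X_s|^q \leq c(s,t)$ for all $(s,t) \in \Delta_T$, every $n\in\mathbb{N}$ and every $(s,t)\in\Delta_T$, $$\bigg|\int_0^{t} X^n_r \otimes \mathrm{d} X_r-\int_0^{s} X^n_r \otimes \mathrm{d} X_r-X_s \otimes (X_t-X_s)\bigg | \le C \max\big\{2^{-n} c(s,t)^{1/q},\ 2^{n (q-2)} c(s,t) + c(s,t)^{2/q}\big\}.$$
   Context: $|\cdot|$ is the Euclidean norm; $\Delta_T=\{(s,t):0\le s\le t\le T\}$. A function $c\colon\Delta_T\to[0,\infty)$ is super-additive if $c(s,u)+c(u,t)\le c(s,t)$ for $0\le s\le u\le t\le T$. Dyadic approximation: $\tau^n_0:=0$, $\tau^n_{k+1}:=\inf\{t\ge\tau^n_k: |X_t-X_{\tau^n_k}|\ge 2^{-n}\}$, $X^n_t:=\sum_{k\ge0}X_{\tau^n_k}\mathbf{1}_{(\tau^n_k,\tau^n_{k+1}]}(t)$, and $\int_0^t X^n_r\otimes\mathrm{d}X_r:=\sum_{k\ge0}X_{\tau^n_k}\otimes(X_{\tau^n_{k+1}\wedge t}-X_{\tau^n_k\wedge t})$. *)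

theory Defs
  imports "HOL-Analysis.Analysis"
begin

text \<open>Tensor (outer) product in R^d (x) R^d, realised as a d x d matrix;
  the norm on real^'d^'d is the Euclidean (Frobenius / Hilbert-Schmidt) norm.\<close>
definition tensor :: "real^'d \<Rightarrow> real^'d \<Rightarrow> real^'d^'d" (infixl "\<otimes>\<^sub>t" 70) where
  "x \<otimes>\<^sub>t y = (\<chi> i j. x $ i * y $ j)"

definition cadlag :: "real \<Rightarrow> (real \<Rightarrow> 'a::topological_space) \<Rightarrow> bool" where
  "cadlag T X \<longleftrightarrow>
     (\<forall>t\<in>{0..<T}. (X \<longlongrightarrow> X t) (at_right t)) \<and>
     (\<forall>t\<in>{0<..T}. \<exists>l. (X \<longlongrightarrow> l) (at_left t))"

definition finite_pvar :: "real \<Rightarrow> real \<Rightarrow> (real \<Rightarrow> 'a::real_normed_vector) \<Rightarrow> bool" where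
  "finite_pvar p T X \<longleftrightarrow>
     (\<exists>M. \<forall>m::nat. \<forall>tt::nat \<Rightarrow> real.
        tt 0 = 0 \<and> tt m = T \<and> (\<forall>i<m. tt i < tt (Suc i)) \<longrightarrow>
        (\<Sum>i<m. norm (X (tt (Suc i)) - X (tt i)) powr p) \<le> M)"

text \<open>Dyadic hitting times (values in ereal; inf of the empty set is +infinity).\<close>
fun tau :: "real \<Rightarrow> (real \<Rightarrow> 'a::real_normed_vector) \<Rightarrow> nat \<Rightarrow> nat \<Rightarrow> ereal" where
  "tau T X n 0 = 0"
| "tau T X n (Suc k) =
     Inf (ereal ` {t\<in>{0..T}. tau T X n k \<le> ereal t \<and>
                     norm (X t - X (real_of_ereal (tau T X n k))) \<ge> 2 powr (- real n)})"

definition Xstop :: "(real \<Rightarrow> 'a) \<Rightarrow> ereal \<Rightarrow> real \<Rightarrow> 'a" where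
  "Xstop X \<sigma> t = X (real_of_ereal (min \<sigma> (ereal t)))"

text \<open>int_0^t X^n_r (x) dX_r := sum_k X_{tau_k} (x) (X_{tau_{k+1} \<and> t} - X_{tau_k \<and> t}).
  Summands with tau_k = +infinity vanish.\<close>
definition dyadic_int :: "real \<Rightarrow> (real \<Rightarrow> real^'d) \<Rightarrow> nat \<Rightarrow> real \<Rightarrow> real^'d^'d" where
  "dyadic_int T X n t =
     (\<Sum>k. X (real_of_ereal (tau T X n k)) \<otimes>\<^sub>t
            (Xstop X (tau T X n (Suc k)) t - Xstop X (tau T X n k) t))"

definition superadditive :: "real \<Rightarrow> (real \<Rightarrow> real \<Rightarrow> real) \<Rightarrow> bool" where
  "superadditive T c \<longleftrightarrow>
     (\<forall>s u t. 0 \<le> s \<and> s \<le> u \<and> u \<le> t \<and> t \<le> T \<longrightarrow> c s u + c u t \<le> c s t)"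

end

theory Submission
  imports Defs
begin

(* The increment of the dyadic integral over [s,t] splits along the hitting times tau_k
   clipped to [s,t]: it is one start error, coming from the last hitting time k_s before s,
   plus the iterated sum of X along the partition of [s,t] by the clipped hitting times.
   The start error is the product of an increment smaller than 2^-n and one bounded by
   c(s,t)^(1/q). For the iterated sum over m intervals, superadditivity of c yields a
   partition point whose removal changes the sum by at most (2 c(s,t) / m)^(2/q); removing
   points one by one bounds it by c(s,t)^(2/q) m^(1-2/q). Every complete excursion of size
   2^-n uses up 2^(-nq) of control, so m <= 2 + c(s,t) 2^(nq), and the two bounds combine
   to c(s,t)^(2/q) + 2^(n(q-2)) c(s,t).

   Only right-continuity of X and q > 2 enter the estimate. *)

lemma norm_tensor: "norm (x \<otimes>\<^sub>t y) = norm x * norm y"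
proof -
  have "x \<otimes>\<^sub>t y = (\<chi> i. x $ i *\<^sub>R y)" by (simp add: tensor_def vec_eq_iff)
  then have "norm (x \<otimes>\<^sub>t y) = L2_set (\<lambda>i. norm (x $ i *\<^sub>R y)) UNIV"
    by (simp only: norm_vec_def vec_lambda_beta)
  also have "\<dots> = norm y * L2_set (\<lambda>i. \<bar>x $ i\<bar>) UNIV"
    by (simp add: L2_set_right_distrib mult.commute)
  finally show ?thesis by (simp add: norm_vec_def L2_set_def)
qed

interpretation tensor: bounded_bilinear "(\<otimes>\<^sub>t) :: real^'d \<Rightarrow> real^'d \<Rightarrow> real^'d^'d"
proof
  show "\<exists>K. \<forall>x y. norm (x \<otimes>\<^sub>t y) \<le> norm x * norm y * K"
    by (rule exI[of _ 1]) (simp add: norm_tensor)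
qed (simp_all add: tensor_def vec_eq_iff algebra_simps)

lemma powr_diff_lower_bound:
  fixes b x :: real
  assumes "0 < b" "b < 1" "1 \<le> x"
  shows "b * x powr (b - 1) \<le> x powr b - (x - 1) powr b"
proof (cases "x = 1")
  case True
  then show ?thesis using assms by simp
next
  case False
  with assms have x1: "1 < x" by simp
  have "\<exists>z. x - 1 < z \<and> z < x \<and> x powr b - (x - 1) powr b = (x - (x - 1)) * (b * z powr (b - 1))"
    using x1 by (intro MVT2) (auto intro!: derivative_eq_intros)
  then obtain z where z: "x - 1 < z" "z < x" "x powr b - (x - 1) powr b = b * z powr (b - 1)"
    by auto
  have "x powr (b - 1) \<le> z powr (b - 1)"
    using z x1 assms by (intro powr_mono2') auto
  then show ?thesis using z assms by simp
qed

definition controls :: "real \<Rightarrow> real \<Rightarrow> (real \<Rightarrow> 'a::real_normed_vector) \<Rightarrow> (real \<Rightarrow> real \<Rightarrow> real) \<Rightarrow> bool" where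
  "controls T q X c \<longleftrightarrow> superadditive T c \<and>
    (\<forall>s t. 0 \<le> s \<and> s \<le> t \<and> t \<le> T \<longrightarrow> 0 \<le> c s t) \<and>
    (\<forall>s t. 0 \<le> s \<and> s \<le> t \<and> t \<le> T \<longrightarrow> norm (X t - X s) powr q \<le> c s t)"

lemma controls_nonneg: "controls T q X c \<Longrightarrow> 0 \<le> s \<Longrightarrow> s \<le> t \<Longrightarrow> t \<le> T \<Longrightarrow> 0 \<le> c s t"
  by (simp add: controls_def)

lemma controls_superadditive:
  "controls T q X c \<Longrightarrow> 0 \<le> s \<Longrightarrow> s \<le> u \<Longrightarrow> u \<le> t \<Longrightarrow> t \<le> T \<Longrightarrow> c s u + c u t \<le> c s t"
  by (simp add: controls_def superadditive_def)

lemma controls_mono: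
  assumes "controls T q X c" "0 \<le> s" "s \<le> u" "u \<le> v" "v \<le> t" "t \<le> T"
  shows "c u v \<le> c s t"
proof -
  have "c s u + c u t \<le> c s t" "c u v + c v t \<le> c u t"
    using assms by (auto intro: controls_superadditive)
  moreover have "0 \<le> c s u" "0 \<le> c v t"
    using assms by (auto intro: controls_nonneg)
  ultimately show ?thesis by linarith
qed

lemma norm_diff_le_controls:
  assumes "controls T q X c" "0 < q" "0 \<le> u" "u \<le> v" "v \<le> T"
  shows "norm (X v - X u) \<le> c u v powr (1/q)"
proof -
  have "norm (X v - X u) = (norm (X v - X u) powr q) powr (1/q)"
    using assms by (simp add: powr_powr)
  also have "\<dots> \<le> c u v powr (1/q)"
    using assms unfolding controls_def by (intro powr_mono2) auto
  finally show ?thesis .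
qed

lemma controls_sum_le:
  assumes "controls T q X c" "0 \<le> Q 0" "Q r \<le> T" "mono_on {..r} Q"
  shows "(\<Sum>i<r. c (Q i) (Q (Suc i))) \<le> c (Q 0) (Q r)"
  using assms(3,4)
proof (induction r)
  case 0
  then show ?case using assms by (auto intro: controls_nonneg)
next
  case (Suc r)
  have Q: "Q 0 \<le> Q r" "Q r \<le> Q (Suc r)"
    using Suc.prems(2) by (auto intro: mono_onD)
  have "mono_on {..r} Q"
    using Suc.prems(2) by (rule mono_on_subset) auto
  then have "(\<Sum>i<r. c (Q i) (Q (Suc i))) \<le> c (Q 0) (Q r)"
    using Suc Q by simp
  moreover have "c (Q 0) (Q r) + c (Q r) (Q (Suc r)) \<le> c (Q 0) (Q (Suc r))"
    using assms Suc.prems Q by (intro controls_superadditive) auto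
  ultimately show ?case by simp
qed

lemma norm_tensor_increments_le_controls:
  assumes "controls T q X c" "0 < q" "0 \<le> u" "u \<le> v" "v \<le> w" "w \<le> T"
  shows "norm ((X v - X u) \<otimes>\<^sub>t (X w - X v)) \<le> (c u v + c v w) powr (2/q)"
proof -
  have nonneg: "0 \<le> c u v" "0 \<le> c v w"
    using assms by (auto intro: controls_nonneg)
  have "norm (X v - X u) \<le> c u v powr (1/q)"
    using norm_diff_le_controls[OF assms(1,2), of u v] assms by simp
  also have "\<dots> \<le> (c u v + c v w) powr (1/q)"
    using assms nonneg by (intro powr_mono2) auto
  moreover have "norm (X w - X v) \<le> c v w powr (1/q)"
    using norm_diff_le_controls[OF assms(1,2), of v w] assms by simp
  moreover have "\<dots> \<le> (c u v + c v w) powr (1/q)"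
    using assms nonneg by (intro powr_mono2) auto
  ultimately have "norm ((X v - X u) \<otimes>\<^sub>t (X w - X v)) \<le> (c u v + c v w) powr (1/q) * (c u v + c v w) powr (1/q)"
    unfolding norm_tensor by (intro mult_mono) (auto intro: order_trans)
  then show ?thesis by (simp add: powr_add[symmetric])
qed

definition iterated_sum :: "(nat \<Rightarrow> real^'d) \<Rightarrow> nat \<Rightarrow> real^'d^'d" where
  "iterated_sum x m = (\<Sum>i<m. (x i - x 0) \<otimes>\<^sub>t (x (Suc i) - x i))"

lemma iterated_sum_remove_point:
  assumes "k < n"
  shows "iterated_sum x (Suc n) = iterated_sum (\<lambda>i. if i \<le> k then x i else x (Suc i)) n
     + (x (Suc k) - x k) \<otimes>\<^sub>t (x (Suc (Suc k)) - x (Suc k))"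
proof -
  define x' where "x' = (\<lambda>i. if i \<le> k then x i else x (Suc i))"
  define f where "f = (\<lambda>i. (x i - x 0) \<otimes>\<^sub>t (x (Suc i) - x i))"
  have "Suc k \<le> n" using assms by simp
  then have "iterated_sum x (Suc n) = iterated_sum x' n
     + (x (Suc k) - x k) \<otimes>\<^sub>t (x (Suc (Suc k)) - x (Suc k))"
  proof (induction n rule: dec_induct)
    case base
    have "iterated_sum x' (Suc k) = (\<Sum>i<k. f i) + (x k - x 0) \<otimes>\<^sub>t (x (Suc (Suc k)) - x k)"
      unfolding iterated_sum_def sum.lessThan_Suc by (auto simp: x'_def f_def intro!: sum.cong)
    moreover have "iterated_sum x (Suc (Suc k)) = (\<Sum>i<k. f i) + f k + f (Suc k)"
      unfolding iterated_sum_def f_def by simp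
    moreover have "f k + f (Suc k) = (x k - x 0) \<otimes>\<^sub>t (x (Suc (Suc k)) - x k)
       + (x (Suc k) - x k) \<otimes>\<^sub>t (x (Suc (Suc k)) - x (Suc k))"
      unfolding f_def by (simp add: tensor_def vec_eq_iff algebra_simps)
    ultimately show ?case by (simp add: add.assoc)
  next
    case (step m)
    have "iterated_sum x (Suc (Suc m)) = iterated_sum x (Suc m) + f (Suc m)"
      "iterated_sum x' (Suc m) = iterated_sum x' m + f (Suc m)"
      using step.hyps by (simp_all add: iterated_sum_def f_def x'_def)
    then show ?case using step.IH by simp
  qed
  then show ?thesis by (simp add: x'_def)
qed

lemma exists_adjacent_sum_le:
  fixes g :: "nat \<Rightarrow> real"
  assumes "0 < n" "\<And>i. i \<le> n \<Longrightarrow> 0 \<le> g i"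
  shows "\<exists>k<n. g k + g (Suc k) \<le> 2 * (\<Sum>i\<le>n. g i) / n"
proof (rule ccontr)
  assume "\<not> ?thesis"
  then have "(\<Sum>k<n. 2 * (\<Sum>i\<le>n. g i) / n) < (\<Sum>k<n. g k + g (Suc k))"
    using assms(1) by (intro sum_strict_mono) auto
  also have "\<dots> = (\<Sum>k<n. g k) + (\<Sum>k<n. g (Suc k))"
    by (rule sum.distrib)
  also have "\<dots> \<le> 2 * (\<Sum>i\<le>n. g i)"
    using sum.lessThan_Suc_shift[of g n] sum.lessThan_Suc[of g n] assms(2)[of 0] assms(2)[of n]
    by (simp add: lessThan_Suc_atMost)
  finally show False using assms(1) by simp
qed

lemma powr_avg_le_powr_increment:
  fixes a q :: real and n :: nat
  assumes "2 < q" "0 \<le> a" "1 \<le> n"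
  shows "(2 * a / n) powr (2/q)
    \<le> 2 powr (2/q) / (1 - 2/q) * a powr (2/q) * (real n powr (1 - 2/q) - (real n - 1) powr (1 - 2/q))"
proof -
  define b where "b = 1 - 2/q"
  have b: "0 < b" "b < 1" using assms(1) by (auto simp: b_def)
  have "(2 * a / n) powr (2/q) = 2 powr (2/q) / b * a powr (2/q) * (b * real n powr (b - 1))"
    using assms b by (simp add: powr_divide powr_mult b_def powr_minus_divide)
  also have "\<dots> \<le> 2 powr (2/q) / b * a powr (2/q) * (real n powr b - (real n - 1) powr b)"
    using powr_diff_lower_bound[OF b, of n] assms b by (intro mult_left_mono) auto
  finally show ?thesis by (simp add: b_def)
qed

lemma exists_removable_point:
  fixes X :: "real \<Rightarrow> real^'d"
  assumes ct: "controls T q X c" and "0 < q" "0 < n"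
    and "0 \<le> Q 0" "Q (Suc n) \<le> T" "mono_on {..Suc n} Q"
  shows "\<exists>k<n. norm ((X (Q (Suc k)) - X (Q k)) \<otimes>\<^sub>t (X (Q (Suc (Suc k))) - X (Q (Suc k))))
    \<le> (2 * c (Q 0) (Q (Suc n)) / n) powr (2/q)"
proof -
  define g where "g = (\<lambda>i. c (Q i) (Q (Suc i)))"
  have Qle: "Q i \<le> Q j" if "i \<le> j" "j \<le> Suc n" for i j
    using assms(6) that by (auto intro: mono_onD)
  have Qin: "0 \<le> Q i" "Q i \<le> T" if "i \<le> Suc n" for i
    using Qle[of 0 i] Qle[of i "Suc n"] assms(4,5) that by auto
  have g_nonneg: "0 \<le> g i" if "i \<le> n" for i
    unfolding g_def using that Qin Qle by (intro controls_nonneg[OF ct]) auto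
  then obtain k where k: "k < n" "g k + g (Suc k) \<le> 2 * (\<Sum>i\<le>n. g i) / n"
    using exists_adjacent_sum_le[of n g] assms(3) by auto
  have "norm ((X (Q (Suc k)) - X (Q k)) \<otimes>\<^sub>t (X (Q (Suc (Suc k))) - X (Q (Suc k))))
    \<le> (g k + g (Suc k)) powr (2/q)"
    unfolding g_def using k Qin Qle assms(2) by (intro norm_tensor_increments_le_controls[OF ct]) auto
  also have "\<dots> \<le> (2 * (\<Sum>i\<le>n. g i) / n) powr (2/q)"
    using k g_nonneg[of k] g_nonneg[of "Suc k"] assms(2) by (intro powr_mono2) auto
  also have "(\<Sum>i\<le>n. g i) \<le> c (Q 0) (Q (Suc n))"
    unfolding g_def lessThan_Suc_atMost[symmetric] using assms(4-)
    by (intro controls_sum_le[OF ct])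
  then have "(2 * (\<Sum>i\<le>n. g i) / n) powr (2/q) \<le> (2 * c (Q 0) (Q (Suc n)) / n) powr (2/q)"
    using g_nonneg assms(2) by (intro powr_mono2 divide_right_mono) (auto intro!: divide_nonneg_nonneg sum_nonneg)
  finally show ?thesis using k(1) by blast
qed

lemma norm_iterated_sum_le:
  fixes X :: "real \<Rightarrow> real^'d"
  assumes ct: "controls T q X c" and q: "2 < q"
    and "1 \<le> m" "0 \<le> Q 0" "Q m \<le> T" "mono_on {..m} Q"
  shows "norm (iterated_sum (\<lambda>i. X (Q i)) m)
    \<le> 2 powr (2/q) / (1 - 2/q) * c (Q 0) (Q m) powr (2/q) * (real m - 1) powr (1 - 2/q)"
  using assms(3-)
proof (induction m arbitrary: Q rule: nat_induct_at_least)
  case base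
  then show ?case by (simp add: iterated_sum_def tensor.zero_left)
next
  case (Suc n)
  define A where "A = 2 powr (2/q) / (1 - 2/q)"
  define b where "b = 1 - 2/q"
  define a where "a = c (Q 0) (Q (Suc n))"
  obtain k where k: "k < n"
    and removed: "norm ((X (Q (Suc k)) - X (Q k)) \<otimes>\<^sub>t (X (Q (Suc (Suc k))) - X (Q (Suc k))))
      \<le> (2 * a / n) powr (2/q)"
    using exists_removable_point[OF ct _ _ Suc.prems] q Suc.hyps unfolding a_def by auto
  define Q' where "Q' = (\<lambda>i. if i \<le> k then Q i else Q (Suc i))"
  have "Q i \<le> Q j" if "i \<le> j" "j \<le> Suc n" for i j
    using Suc.prems(3) that by (auto intro: mono_onD)
  then have "mono_on {..n} Q'"
    unfolding Q'_def by (auto intro!: mono_onI)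
  then have IH: "norm (iterated_sum (\<lambda>i. X (Q' i)) n) \<le> A * a powr (2/q) * (real n - 1) powr b"
    using Suc.IH[of Q'] Suc.prems k by (simp add: A_def b_def a_def Q'_def)
  have "0 \<le> a"
    unfolding a_def using Suc.prems by (intro controls_nonneg[OF ct]) (auto dest: mono_onD)
  then have "(2 * a / n) powr (2/q) \<le> A * a powr (2/q) * (real n powr b - (real n - 1) powr b)"
    unfolding A_def b_def using q Suc.hyps by (intro powr_avg_le_powr_increment)
  with removed have removed': "norm ((X (Q (Suc k)) - X (Q k)) \<otimes>\<^sub>t (X (Q (Suc (Suc k))) - X (Q (Suc k))))
    \<le> A * a powr (2/q) * (real n powr b - (real n - 1) powr b)" by (rule order_trans)
  have "iterated_sum (\<lambda>i. X (Q i)) (Suc n) = iterated_sum (\<lambda>i. X (Q' i)) n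
     + (X (Q (Suc k)) - X (Q k)) \<otimes>\<^sub>t (X (Q (Suc (Suc k))) - X (Q (Suc k)))"
    using iterated_sum_remove_point[OF k, of "\<lambda>i. X (Q i)"] by (simp add: Q'_def if_distrib)
  then have "norm (iterated_sum (\<lambda>i. X (Q i)) (Suc n)) \<le> norm (iterated_sum (\<lambda>i. X (Q' i)) n)
     + norm ((X (Q (Suc k)) - X (Q k)) \<otimes>\<^sub>t (X (Q (Suc (Suc k))) - X (Q (Suc k))))"
    by (simp add: norm_triangle_ineq)
  also have "\<dots> \<le> A * a powr (2/q) * (real n - 1) powr b
     + A * a powr (2/q) * (real n powr b - (real n - 1) powr b)"
    using IH removed' by (rule add_mono)
  also have "\<dots> = A * a powr (2/q) * (real (Suc n) - 1) powr b"
    by (simp add: algebra_simps)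
  finally show ?case by (simp add: A_def b_def a_def)
qed

definition exit_set :: "real \<Rightarrow> (real \<Rightarrow> 'a::real_normed_vector) \<Rightarrow> nat \<Rightarrow> nat \<Rightarrow> real set" where
  "exit_set T X n k = {t\<in>{0..T}. tau T X n k \<le> ereal t \<and>
       norm (X t - X (real_of_ereal (tau T X n k))) \<ge> 2 powr (- real n)}"

lemma tau_Suc_exit_set: "tau T X n (Suc k) = Inf (ereal ` exit_set T X n k)"
  by (simp add: exit_set_def)

declare tau.simps(2)[simp del]

lemma tau_nonneg: "0 \<le> tau T X n k"
proof (cases k)
  case (Suc j)
  show ?thesis unfolding Suc tau_Suc_exit_set by (rule Inf_greatest) (auto simp: exit_set_def)
qed simp

lemma tau_Suc_eq_infinity: "exit_set T X n k = {} \<Longrightarrow> tau T X n (Suc k) = \<infinity>"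
  unfolding tau_Suc_exit_set by (simp add: top_ereal_def[symmetric])

lemma tau_Suc_eq_infinityI: "tau T X n k = \<infinity> \<Longrightarrow> tau T X n (Suc k) = \<infinity>"
  by (rule tau_Suc_eq_infinity) (auto simp: exit_set_def)

lemma tau_le_T:
  assumes "0 \<le> T" "tau T X n k = ereal a"
  shows "a \<le> T"
proof (cases k)
  case 0
  then show ?thesis using assms by (simp add: zero_ereal_def)
next
  case (Suc j)
  then obtain y where y: "y \<in> exit_set T X n j"
    using tau_Suc_eq_infinity[of T X n j] assms by auto
  then have "tau T X n k \<le> ereal y" unfolding Suc tau_Suc_exit_set by (auto intro: Inf_lower)
  then show ?thesis using y assms by (auto simp: exit_set_def)
qed

lemma tau_cases:
  assumes "0 \<le> T"
  shows "tau T X n k = \<infinity> \<or> (\<exists>a. tau T X n k = ereal a \<and> 0 \<le> a \<and> a \<le> T)"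
  using tau_nonneg[of T X n k] tau_le_T[OF assms, of X n k] by (cases "tau T X n k") auto

lemma norm_diff_lt_before_tau_Suc:
  assumes "tau T X n k = ereal a" "0 \<le> u" "u \<le> T" "a \<le> u" "ereal u < tau T X n (Suc k)"
  shows "norm (X u - X a) < 2 powr (- real n)"
proof (rule ccontr)
  assume "\<not> ?thesis"
  then have "u \<in> exit_set T X n k" using assms by (auto simp: exit_set_def)
  then have "tau T X n (Suc k) \<le> ereal u" unfolding tau_Suc_exit_set by (auto intro: Inf_lower)
  then show False using assms(5) by simp
qed

lemma Inf_superlevel_set_mem:
  fixes f :: "real \<Rightarrow> real"
  assumes rc: "\<And>x. x \<in> {a..<T} \<Longrightarrow> (f \<longlongrightarrow> f x) (at_right x)"
    and A: "A = {x\<in>{a..T}. e \<le> f x}" "A \<noteq> {}"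
  shows "Inf A \<in> A"
proof (rule ccontr)
  define b where "b = Inf A"
  assume "b \<notin> A"
  have bdd: "bdd_below A" using A by (auto intro: bdd_belowI[of _ a])
  have above_b: "b < y" if "y \<in> A" for y
    using cInf_lower[OF that bdd] that \<open>b \<notin> A\<close> unfolding b_def by (metis order_le_less)
  obtain y0 where "y0 \<in> A" using A by auto
  moreover have "a \<le> b" unfolding b_def using A by (intro cInf_greatest) auto
  ultimately have "b \<in> {a..<T}" using above_b[of y0] A by auto
  then have "f b < e" using \<open>b \<notin> A\<close> A by auto
  from order_tendstoD(2)[OF rc[OF \<open>b \<in> {a..<T}\<close>] this]
  obtain d where "d > b" and below: "\<And>y. b < y \<Longrightarrow> y < d \<Longrightarrow> f y < e"
    unfolding eventually_at_right_field by auto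
  then obtain y where "y \<in> A" "y < d" using A bdd unfolding b_def by (auto simp: cInf_less_iff)
  then show False using below[of y] above_b[of y] A by auto
qed

lemma tau_Suc_in_exit_set:
  fixes X :: "real \<Rightarrow> 'a::real_normed_vector"
  assumes rc: "\<forall>t\<in>{0..<T}. (X \<longlongrightarrow> X t) (at_right t)"
    and a: "tau T X n k = ereal a" and ne: "exit_set T X n k \<noteq> {}"
  shows "\<exists>b\<in>exit_set T X n k. tau T X n (Suc k) = ereal b \<and> a < b"
proof -
  let ?A = "exit_set T X n k"
  have "0 \<le> a" using tau_nonneg[of T X n k] a by simp
  then have A: "?A = {x\<in>{a..T}. 2 powr (- real n) \<le> norm (X x - X a)}"
    using a by (auto simp: exit_set_def)
  have "Inf ?A \<in> ?A"
    using rc \<open>0 \<le> a\<close> ne by (intro Inf_superlevel_set_mem[OF _ A]) (auto intro!: tendsto_intros)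
  moreover have "bdd_below ?A" using A by (auto intro: bdd_belowI[of _ a])
  then have "tau T X n (Suc k) = ereal (Inf ?A)"
    unfolding tau_Suc_exit_set using ereal_Inf'[OF _ ne] by simp
  moreover have "a \<noteq> Inf ?A" using \<open>Inf ?A \<in> ?A\<close> A by auto
  ultimately show ?thesis using A by force
qed

lemma tau_Suc_realD:
  fixes X :: "real \<Rightarrow> 'a::real_normed_vector"
  assumes rc: "\<forall>t\<in>{0..<T}. (X \<longlongrightarrow> X t) (at_right t)"
    and b: "tau T X n (Suc k) = ereal b"
  shows "\<exists>a. tau T X n k = ereal a \<and> a < b \<and> 2 powr (- real n) \<le> norm (X b - X a)"
proof -
  obtain a where a: "tau T X n k = ereal a"
    using tau_Suc_eq_infinityI[of T X n k] tau_nonneg[of T X n k] b by (cases "tau T X n k") auto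
  moreover have "exit_set T X n k \<noteq> {}" using tau_Suc_eq_infinity[of T X n k] b by auto
  ultimately show ?thesis
    using tau_Suc_in_exit_set[OF rc] b by (fastforce simp: exit_set_def)
qed

lemma tau_mono:
  fixes X :: "real \<Rightarrow> 'a::real_normed_vector"
  assumes rc: "\<forall>t\<in>{0..<T}. (X \<longlongrightarrow> X t) (at_right t)"
  shows "mono (tau T X n)"
proof (rule incseq_SucI)
  fix k
  show "tau T X n k \<le> tau T X n (Suc k)"
    using tau_Suc_realD[OF rc, of n k] tau_nonneg[of T X n "Suc k"]
    by (cases "tau T X n (Suc k)") auto
qed

lemma controls_ge_excursions:
  fixes X :: "real \<Rightarrow> 'a::real_normed_vector"
  assumes rc: "\<forall>t\<in>{0..<T}. (X \<longlongrightarrow> X t) (at_right t)"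
    and ct: "controls T q X c" and "0 < q" "0 \<le> T"
    and a: "tau T X n j = ereal a" and "j \<le> k" and "tau T X n k = ereal b"
  shows "real (k - j) * (2 powr (- real n)) powr q \<le> c a b"
  using \<open>j \<le> k\<close> \<open>tau T X n k = ereal b\<close>
proof (induction k arbitrary: b rule: dec_induct)
  case base
  then show ?case using a tau_cases[OF \<open>0 \<le> T\<close>, of X n j] by (auto intro: controls_nonneg[OF ct])
next
  case (step k b')
  obtain b where b: "tau T X n k = ereal b" "b < b'" and exit: "2 powr (- real n) \<le> norm (X b' - X b)"
    using tau_Suc_realD[OF rc step.prems] by auto
  have "a \<le> b" using monoD[OF tau_mono[OF rc, of n] step.hyps(1)] a b by simp
  moreover have "0 \<le> a" using tau_nonneg[of T X n j] a by simp
  moreover have "b' \<le> T" using tau_le_T[OF \<open>0 \<le> T\<close> step.prems] .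
  ultimately have "c a b + c b b' \<le> c a b'" and "norm (X b' - X b) powr q \<le> c b b'"
    using b ct by (auto intro: controls_superadditive simp: controls_def)
  moreover have "(2 powr (- real n)) powr q \<le> norm (X b' - X b) powr q"
    using exit \<open>0 < q\<close> by (intro powr_mono2) auto
  moreover have "real (Suc k - j) = real (k - j) + 1" using step.hyps(1) by simp
  ultimately show ?case using step.IH[OF b(1)] by (simp add: algebra_simps)
qed

lemma powr_interpolation_le:
  fixes a x q :: real
  assumes q: "2 < q" and "0 \<le> a" "0 \<le> x" "x \<le> 1 + a * 2 powr (real n * q)"
  shows "a powr (2/q) * x powr (1 - 2/q) \<le> 2 * (a powr (2/q) + 2 powr (real n * (q - 2)) * a)"
proof -
  define b where "b = 1 - 2/q"
  define K where "K = a * 2 powr (real n * q)"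
  have b: "0 < b" "b < 1" using q by (auto simp: b_def)
  have "0 \<le> K" using assms by (simp add: K_def)
  have two: "2 powr b \<le> (2::real)" using powr_mono[of b 1 "2::real"] b by simp
  have "0 \<le> K powr b" by simp
  have "x powr b \<le> (1 + K) powr b" using assms b by (intro powr_mono2) (auto simp: K_def)
  also have "\<dots> \<le> 2 * (1 + K powr b)"
  proof (cases "K \<le> 1")
    case True
    then have "(1 + K) powr b \<le> 2 powr b" using \<open>0 \<le> K\<close> b by (intro powr_mono2) auto
    also note two
    also have "2 \<le> 2 * (1 + K powr b)" using \<open>0 \<le> K powr b\<close> by simp
    finally show ?thesis .
  next
    case False
    then have "(1 + K) powr b \<le> (2 * K) powr b" using b by (intro powr_mono2) auto
    also have "\<dots> = 2 powr b * K powr b" by (simp add: powr_mult)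
    also have "\<dots> \<le> 2 * K powr b" using two \<open>0 \<le> K powr b\<close> by (rule mult_right_mono)
    also have "\<dots> \<le> 2 * (1 + K powr b)" by simp
    finally show ?thesis .
  qed
  finally have "a powr (2/q) * x powr b \<le> a powr (2/q) * (2 * (1 + K powr b))"
    by (rule mult_left_mono) simp
  also have "\<dots> = 2 * (a powr (2/q) + a powr (2/q + b) * 2 powr (real n * q * b))"
    by (simp add: K_def powr_mult powr_powr powr_add ring_distribs)
  finally have bound: "a powr (2/q) * x powr b
      \<le> 2 * (a powr (2/q) + a powr (2/q + b) * 2 powr (real n * q * b))" .
  have exps: "2/q + b = 1" "real n * q * b = real n * (q - 2)"
    using q by (simp_all add: b_def right_diff_distrib)
  show ?thesis using bound[unfolded exps] \<open>0 \<le> a\<close> by (simp add: b_def mult.commute)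
qed

context
  fixes X :: "real \<Rightarrow> real^'d" and T q :: real and c :: "real \<Rightarrow> real \<Rightarrow> real"
    and n :: nat and s t :: real
  assumes right_cont: "\<forall>t\<in>{0..<T}. (X \<longlongrightarrow> X t) (at_right t)"
    and ct: "controls T q X c" and q: "2 < q"
    and interval: "0 \<le> s" "s < t" "t \<le> T"
begin

abbreviation \<tau> :: "nat \<Rightarrow> ereal" where "\<tau> k \<equiv> tau T X n k"

lemma T_nonneg: "0 \<le> T"
  using interval by linarith

definition hit_bound :: nat where
  "hit_bound = nat \<lceil>c 0 T / (2 powr (- real n)) powr q\<rceil> + 1"

lemma tau_eq_infinity_beyond: "hit_bound \<le> k \<Longrightarrow> \<tau> k = \<infinity>"
proof (rule ccontr)
  assume k: "hit_bound \<le> k" and "\<tau> k \<noteq> \<infinity>"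
  then obtain b where b: "\<tau> k = ereal b" "0 \<le> b" "b \<le> T"
    using tau_cases[OF T_nonneg, of X n k] by auto
  have "real k * (2 powr (- real n)) powr q \<le> c 0 b"
    using controls_ge_excursions[OF right_cont ct _ T_nonneg _ _ b(1), of 0] q
    by (simp add: zero_ereal_def)
  also have "c 0 b \<le> c 0 T" using b T_nonneg by (intro controls_mono[OF ct]) auto
  finally have "real k \<le> c 0 T / (2 powr (- real n)) powr q" by (simp add: field_simps)
  then show False using k unfolding hit_bound_def by linarith
qed

lemma dyadic_int_eq_sum:
  "dyadic_int T X n u = (\<Sum>k<hit_bound. X (real_of_ereal (\<tau> k)) \<otimes>\<^sub>t (Xstop X (\<tau> (Suc k)) u - Xstop X (\<tau> k) u))"
  unfolding dyadic_int_def
proof (rule suminf_finite)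
  fix k assume "k \<notin> {..<hit_bound}"
  then have "\<tau> k = \<infinity>" "\<tau> (Suc k) = \<infinity>" using tau_eq_infinity_beyond by auto
  then show "X (real_of_ereal (\<tau> k)) \<otimes>\<^sub>t (Xstop X (\<tau> (Suc k)) u - Xstop X (\<tau> k) u) = 0"
    by (simp add: tensor.zero_right)
qed simp

definition clip :: "nat \<Rightarrow> real" where
  "clip k = (if \<tau> k \<le> ereal s then s else if \<tau> k < ereal t then real_of_ereal (\<tau> k) else t)"

lemma clip_range: "s \<le> clip k \<and> clip k \<le> t"
  using tau_cases[OF T_nonneg, of X n k] interval by (auto simp: clip_def)

lemma clip_eq_start: "\<tau> k \<le> ereal s \<Longrightarrow> clip k = s"
  by (simp add: clip_def)

lemma clip_eq_end:
  assumes "ereal t \<le> \<tau> k"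
  shows "clip k = t"
proof -
  have "\<not> \<tau> k \<le> ereal s" using order_trans[OF assms] interval(2) by force
  then show ?thesis using assms by (simp add: clip_def not_less[symmetric])
qed

lemma clip_mono: "mono clip"
proof (rule monoI)
  fix i j :: nat assume "i \<le> j"
  then have "\<tau> i \<le> \<tau> j" using tau_mono[OF right_cont] by (auto dest: monoD)
  then show "clip i \<le> clip j"
    using tau_cases[OF T_nonneg, of X n i] tau_cases[OF T_nonneg, of X n j] clip_range[of i] clip_range[of j]
    by (auto simp: clip_def)
qed

lemma Xstop_diff_eq_clip: "Xstop X (\<tau> k) t - Xstop X (\<tau> k) s = X (clip k) - X s"
  using tau_cases[OF T_nonneg, of X n k] interval by (auto simp: clip_def Xstop_def min_def)

lemma increment_eq_sum:
  "dyadic_int T X n t - dyadic_int T X n s - X s \<otimes>\<^sub>t (X t - X s)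
   = (\<Sum>k<hit_bound. (X (real_of_ereal (\<tau> k)) - X s) \<otimes>\<^sub>t (X (clip (Suc k)) - X (clip k)))"
proof -
  have "dyadic_int T X n t - dyadic_int T X n s =
    (\<Sum>k<hit_bound. X (real_of_ereal (\<tau> k)) \<otimes>\<^sub>t (X (clip (Suc k)) - X (clip k)))"
    unfolding dyadic_int_eq_sum sum_subtractf[symmetric] tensor.diff_right[symmetric]
  proof (intro sum.cong refl arg_cong[where f = "(\<otimes>\<^sub>t) _"])
    fix k
    have "(Xstop X (\<tau> (Suc k)) t - Xstop X (\<tau> k) t) - (Xstop X (\<tau> (Suc k)) s - Xstop X (\<tau> k) s)
       = (Xstop X (\<tau> (Suc k)) t - Xstop X (\<tau> (Suc k)) s) - (Xstop X (\<tau> k) t - Xstop X (\<tau> k) s)"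
      by (simp add: algebra_simps)
    then show "(Xstop X (\<tau> (Suc k)) t - Xstop X (\<tau> k) t) - (Xstop X (\<tau> (Suc k)) s - Xstop X (\<tau> k) s)
       = X (clip (Suc k)) - X (clip k)"
      unfolding Xstop_diff_eq_clip by simp
  qed
  moreover have "X t - X s = (\<Sum>k<hit_bound. X (clip (Suc k)) - X (clip k))"
    using sum_lessThan_telescope[of "\<lambda>k. X (clip k)" hit_bound] tau_eq_infinity_beyond[of hit_bound]
    by (simp add: clip_eq_start clip_eq_end interval zero_ereal_def[symmetric])
  ultimately show ?thesis
    by (simp add: tensor.sum_right sum_subtractf[symmetric] tensor.diff_left)
qed

definition k_s :: nat where
  "k_s = Max {k. \<tau> k \<le> ereal s}"

definition k_t :: nat where
  "k_t = (LEAST k. ereal t \<le> \<tau> k)"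

lemma finite_tau_le_s: "finite {k. \<tau> k \<le> ereal s}"
proof (rule finite_subset)
  show "{k. \<tau> k \<le> ereal s} \<subseteq> {..<hit_bound}"
  proof
    fix k assume "k \<in> {k. \<tau> k \<le> ereal s}"
    then show "k \<in> {..<hit_bound}" using tau_eq_infinity_beyond[of k] by (cases "hit_bound \<le> k") auto
  qed
qed simp

lemma tau_k_s_le: "\<tau> k_s \<le> ereal s"
proof -
  have "k_s \<in> {k. \<tau> k \<le> ereal s}"
    unfolding k_s_def using finite_tau_le_s interval
    by (intro Max_in) (auto intro!: exI[of _ 0] simp: zero_ereal_def)
  then show ?thesis by simp
qed

lemma tau_gt_s: "k_s < k \<Longrightarrow> ereal s < \<tau> k"
proof (rule ccontr)
  assume "k_s < k" "\<not> ereal s < \<tau> k"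
  then have "k \<le> k_s" unfolding k_s_def using finite_tau_le_s by (intro Max_ge) (auto simp: not_less)
  then show False using \<open>k_s < k\<close> by simp
qed

lemma tau_le_s: "k \<le> k_s \<Longrightarrow> \<tau> k \<le> ereal s"
  using order_trans[OF monoD[OF tau_mono[OF right_cont, of n]] tau_k_s_le] .

lemma t_le_tau_k_t: "ereal t \<le> \<tau> k_t"
  unfolding k_t_def by (rule LeastI[of _ hit_bound]) (simp add: tau_eq_infinity_beyond)

lemma tau_lt_t: "k < k_t \<Longrightarrow> \<tau> k < ereal t"
  unfolding k_t_def using not_less_Least[of k "\<lambda>k. ereal t \<le> \<tau> k"] by simp

lemma t_le_tau: "k_t \<le> k \<Longrightarrow> ereal t \<le> \<tau> k"
  using order_trans[OF t_le_tau_k_t monoD[OF tau_mono[OF right_cont, of n]]] .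

lemma k_s_less_k_t: "k_s < k_t"
proof (rule ccontr)
  assume "\<not> k_s < k_t"
  then have "ereal t \<le> ereal s" using order_trans[OF t_le_tau[of k_s] tau_k_s_le] by simp
  then show False using interval(2) by simp
qed

lemma k_t_le_hit_bound: "k_t \<le> hit_bound"
  unfolding k_t_def by (rule Least_le) (simp add: tau_eq_infinity_beyond)

lemma sum_start_errors_eq:
  "(\<Sum>k<hit_bound. (X (real_of_ereal (\<tau> k)) - X (clip k)) \<otimes>\<^sub>t (X (clip (Suc k)) - X (clip k)))
   = (X (real_of_ereal (\<tau> k_s)) - X s) \<otimes>\<^sub>t (X (clip (Suc k_s)) - X s)"
proof -
  have zero: "(X (real_of_ereal (\<tau> k)) - X (clip k)) \<otimes>\<^sub>t (X (clip (Suc k)) - X (clip k)) = 0"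
    if "k \<noteq> k_s" for k
  proof (cases "k < k_s")
    case True
    then show ?thesis using clip_eq_start[OF tau_le_s] by (simp add: tensor.zero_right)
  next
    case False
    with that have "k_s < k" by simp
    then have "\<not> \<tau> k \<le> ereal s" using tau_gt_s not_le by blast
    show ?thesis
    proof (cases "\<tau> k < ereal t")
      case True
      then show ?thesis using \<open>\<not> \<tau> k \<le> ereal s\<close> by (simp add: clip_def tensor.zero_left)
    next
      case False
      then have "ereal t \<le> \<tau> k" "ereal t \<le> \<tau> (Suc k)"
        using monoD[OF tau_mono[OF right_cont, of n], of k "Suc k"] by auto
      then show ?thesis using clip_eq_end by (simp add: tensor.zero_right)
    qed
  qed
  have "k_s \<in> {..<hit_bound}" using k_s_less_k_t k_t_le_hit_bound by simp
  then have "(\<Sum>k<hit_bound. (X (real_of_ereal (\<tau> k)) - X (clip k)) \<otimes>\<^sub>t (X (clip (Suc k)) - X (clip k)))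
    = (X (real_of_ereal (\<tau> k_s)) - X (clip k_s)) \<otimes>\<^sub>t (X (clip (Suc k_s)) - X (clip k_s))"
    by (subst sum.remove[OF finite_lessThan]) (auto simp: zero intro: sum.neutral)
  then show ?thesis using clip_eq_start[OF tau_k_s_le] by simp
qed

lemma sum_clipped_eq_iterated_sum:
  "(\<Sum>k<hit_bound. (X (clip k) - X s) \<otimes>\<^sub>t (X (clip (Suc k)) - X (clip k)))
   = iterated_sum (\<lambda>i. X (clip (k_s + i))) (k_t - k_s)"
proof -
  have "(\<Sum>k<hit_bound. (X (clip k) - X s) \<otimes>\<^sub>t (X (clip (Suc k)) - X (clip k)))
    = (\<Sum>k\<in>{k_s..<k_t}. (X (clip k) - X s) \<otimes>\<^sub>t (X (clip (Suc k)) - X (clip k)))"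
  proof (rule sum.mono_neutral_right)
    show "\<forall>k\<in>{..<hit_bound} - {k_s..<k_t}. (X (clip k) - X s) \<otimes>\<^sub>t (X (clip (Suc k)) - X (clip k)) = 0"
    proof
      fix k assume "k \<in> {..<hit_bound} - {k_s..<k_t}"
      then consider "k < k_s" | "k_t \<le> k" by force
      then show "(X (clip k) - X s) \<otimes>\<^sub>t (X (clip (Suc k)) - X (clip k)) = 0"
      proof cases
        case 1
        then show ?thesis using clip_eq_start[OF tau_le_s] by (simp add: tensor.zero_left)
      next
        case 2
        then show ?thesis using clip_eq_end[OF t_le_tau] by (simp add: tensor.zero_right)
      qed
    qed
  qed (use k_t_le_hit_bound in auto)
  also have "\<dots> = (\<Sum>i<k_t - k_s. (X (clip (k_s + i)) - X s) \<otimes>\<^sub>t (X (clip (Suc (k_s + i))) - X (clip (k_s + i))))"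
    using sum.shift_bounds_nat_ivl[of _ 0 k_s "k_t - k_s"] k_s_less_k_t
    by (simp add: atLeast0LessThan add.commute)
  finally show ?thesis
    unfolding iterated_sum_def using clip_eq_start[OF tau_k_s_le] by simp
qed

lemma norm_start_error_le:
  "norm ((X (real_of_ereal (\<tau> k_s)) - X s) \<otimes>\<^sub>t (X (clip (Suc k_s)) - X s))
   \<le> 2 powr (- real n) * c s t powr (1/q)"
proof -
  obtain a where a: "\<tau> k_s = ereal a" "0 \<le> a" "a \<le> s"
    using tau_cases[OF T_nonneg, of X n k_s] tau_k_s_le by auto
  have "norm (X s - X a) < 2 powr (- real n)"
    using norm_diff_lt_before_tau_Suc[OF a(1)] a interval tau_gt_s[of "Suc k_s"] by auto
  moreover have "norm (X (clip (Suc k_s)) - X s) \<le> c s (clip (Suc k_s)) powr (1/q)"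
    using clip_range[of "Suc k_s"] interval q by (intro norm_diff_le_controls[OF ct]) auto
  moreover have "c s (clip (Suc k_s)) powr (1/q) \<le> c s t powr (1/q)"
    using clip_range[of "Suc k_s"] interval q
    by (intro powr_mono2 controls_mono[OF ct] controls_nonneg[OF ct]) auto
  ultimately show ?thesis
    unfolding norm_tensor a(1) by (simp add: norm_minus_commute mult_mono)
qed

lemma norm_iterated_sum_clipped_le:
  "norm (iterated_sum (\<lambda>i. X (clip (k_s + i))) (k_t - k_s))
   \<le> 2 powr (2/q) / (1 - 2/q) * c s t powr (2/q) * (real (k_t - k_s) - 1) powr (1 - 2/q)"
proof -
  have "clip (k_s + 0) = s" "clip (k_s + (k_t - k_s)) = t"
    using clip_eq_start[OF tau_k_s_le] clip_eq_end[OF t_le_tau_k_t] k_s_less_k_t by simp_all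
  moreover have "mono_on {..k_t - k_s} (\<lambda>i. clip (k_s + i))"
    by (intro mono_onI monoD[OF clip_mono]) simp
  ultimately show ?thesis
    using norm_iterated_sum_le[OF ct q, of "k_t - k_s" "\<lambda>i. clip (k_s + i)"] k_s_less_k_t interval
    by simp
qed

lemma k_t_minus_k_s_le: "real (k_t - k_s) - 1 \<le> 1 + c s t * 2 powr (real n * q)"
proof (cases "Suc k_s < k_t")
  case False
  then have "real (k_t - k_s) \<le> 1" by simp
  moreover have "0 \<le> c s t * 2 powr (real n * q)"
    using interval controls_nonneg[OF ct, of s t] by simp
  ultimately show ?thesis by linarith
next
  case True
  obtain a where a: "\<tau> (Suc k_s) = ereal a"
    using tau_cases[OF T_nonneg, of X n "Suc k_s"] tau_lt_t[OF True] by auto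
  obtain b where b: "\<tau> (k_t - 1) = ereal b"
    using tau_cases[OF T_nonneg, of X n "k_t - 1"] tau_lt_t[of "k_t - 1"] True by fastforce
  have "s < a" using tau_gt_s[of "Suc k_s"] a by simp
  moreover have "b < t" using tau_lt_t[of "k_t - 1"] b True by simp
  moreover have "a \<le> b" using monoD[OF tau_mono[OF right_cont, of n], of "Suc k_s" "k_t - 1"] a b True by simp
  ultimately have "c a b \<le> c s t"
    using interval by (intro controls_mono[OF ct]) auto
  moreover have "real (k_t - 1 - Suc k_s) * (2 powr (- real n)) powr q \<le> c a b"
    using controls_ge_excursions[OF right_cont ct _ T_nonneg a _ b] q True by simp
  ultimately have "real (k_t - 1 - Suc k_s) * (2 powr (- real n)) powr q \<le> c s t"
    by linarith
  moreover have "(2 powr (- real n)) powr q = 1 / 2 powr (real n * q)"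
    unfolding powr_powr mult_minus_left by (rule powr_minus_divide)
  ultimately have "real (k_t - 1 - Suc k_s) \<le> c s t * 2 powr (real n * q)"
    by (simp add: pos_divide_le_eq)
  moreover have "real (k_t - 1 - Suc k_s) = real (k_t - k_s) - 2" using True by simp
  ultimately show ?thesis by simp
qed

lemma norm_dyadic_int_increment_le:
  "norm (dyadic_int T X n t - dyadic_int T X n s - X s \<otimes>\<^sub>t (X t - X s))
   \<le> (1 + 2 * (2 powr (2/q) / (1 - 2/q))) *
      max (2 powr (- real n) * c s t powr (1/q)) (2 powr (real n * (q - 2)) * c s t + c s t powr (2/q))"
proof -
  define A where "A = 2 powr (2/q) / (1 - 2/q)"
  define M where "M = max (2 powr (- real n) * c s t powr (1/q)) (2 powr (real n * (q - 2)) * c s t + c s t powr (2/q))"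
  have "A \<ge> 0" using q by (simp add: A_def)
  have split: "dyadic_int T X n t - dyadic_int T X n s - X s \<otimes>\<^sub>t (X t - X s)
     = (X (real_of_ereal (\<tau> k_s)) - X s) \<otimes>\<^sub>t (X (clip (Suc k_s)) - X s)
       + iterated_sum (\<lambda>i. X (clip (k_s + i))) (k_t - k_s)"
    unfolding increment_eq_sum sum_start_errors_eq[symmetric] sum_clipped_eq_iterated_sum[symmetric]
      sum.distrib[symmetric] tensor.add_left[symmetric] by simp
  have "c s t powr (2/q) * (real (k_t - k_s) - 1) powr (1 - 2/q) \<le> 2 * M"
  proof -
    have "2 powr (real n * (q - 2)) * c s t + c s t powr (2/q) \<le> M"
      unfolding M_def by (rule max.cobounded2)
    moreover have "0 \<le> c s t" "0 \<le> real (k_t - k_s) - 1"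
      using interval k_s_less_k_t by (auto intro: controls_nonneg[OF ct])
    ultimately show ?thesis
      using powr_interpolation_le[OF q _ _ k_t_minus_k_s_le] by fastforce
  qed
  then have iterated: "norm (iterated_sum (\<lambda>i. X (clip (k_s + i))) (k_t - k_s)) \<le> A * (2 * M)"
    using norm_iterated_sum_clipped_le mult_left_mono[OF _ \<open>A \<ge> 0\<close>] by (fastforce simp: A_def mult.assoc)
  have "norm (dyadic_int T X n t - dyadic_int T X n s - X s \<otimes>\<^sub>t (X t - X s))
    \<le> norm ((X (real_of_ereal (\<tau> k_s)) - X s) \<otimes>\<^sub>t (X (clip (Suc k_s)) - X s))
      + norm (iterated_sum (\<lambda>i. X (clip (k_s + i))) (k_t - k_s))"
    unfolding split by (rule norm_triangle_ineq)
  also have "\<dots> \<le> M + A * (2 * M)"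
    using norm_start_error_le iterated unfolding M_def by (intro add_mono max.coboundedI1)
  finally show ?thesis by (simp add: A_def M_def algebra_simps)
qed

end

theorem lemma3p2:
  fixes X :: "real \<Rightarrow> real^'d" and T q :: real
  assumes "cadlag T X"
    and "\<forall>p>2. finite_pvar p T X"
    and "2 < q" and "q < 3"
  shows "\<exists>C>0. \<forall>c :: real \<Rightarrow> real \<Rightarrow> real.
    superadditive T c \<and>
    (\<forall>s t. 0 \<le> s \<and> s \<le> t \<and> t \<le> T \<longrightarrow> 0 \<le> c s t) \<and>
    (\<forall>s t. 0 \<le> s \<and> s \<le> t \<and> t \<le> T \<longrightarrow> norm (X t - X s) powr q \<le> c s t)
    \<longrightarrow> (\<forall>n::nat. \<forall>s t. 0 \<le> s \<and> s \<le> t \<and> t \<le> T \<longrightarrow>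
          norm (dyadic_int T X n t - dyadic_int T X n s - X s \<otimes>\<^sub>t (X t - X s))
          \<le> C * max (2 powr (- real n) * c s t powr (1/q))
                    (2 powr (real n * (q - 2)) * c s t + c s t powr (2/q)))"
proof -
  have right_cont: "\<forall>t\<in>{0..<T}. (X \<longlongrightarrow> X t) (at_right t)"
    using assms(1) by (simp add: cadlag_def)
  define C where "C = 1 + 2 * (2 powr (2/q) / (1 - 2/q))"
  have "0 < C" using assms(3) by (simp add: C_def add_pos_nonneg)
  moreover have "norm (dyadic_int T X n t - dyadic_int T X n s - X s \<otimes>\<^sub>t (X t - X s))
      \<le> C * max (2 powr (- real n) * c s t powr (1/q)) (2 powr (real n * (q - 2)) * c s t + c s t powr (2/q))"
    if ct: "controls T q X c" and st: "0 \<le> s" "s \<le> t" "t \<le> T" for c n s t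
  proof (cases "s = t")
    case True
    have "0 \<le> max (2 powr (- real n) * c s t powr (1/q)) (2 powr (real n * (q - 2)) * c s t + c s t powr (2/q))"
      by (simp add: le_max_iff_disj)
    then show ?thesis using True \<open>0 < C\<close> by (simp add: tensor.zero_right)
  next
    case False
    then show ?thesis
      using norm_dyadic_int_increment_le[OF right_cont ct assms(3), of s t n] st by (simp add: C_def)
  qed
  ultimately show ?thesis unfolding controls_def by blast
qed

end
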